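(* Let $(\mathcal{X},\rho)$ be a metric space of unit diameter, let $\mathbb{X}=(X_n)_{n\ge0}$ be a process in $\mathcal{X}$ with nearest neighbor process $(\tilde X_n)_{n\ge1}$, and let $\mathbb{I}$ be an indicator process. Fix $n$, let $\mathcal{C}$ be a cover tree for the indicated instances $\mathbb{X}[\mathbb{I}_{<n}]$ (enumerated without duplicates in order of first indication), and let $\mathfrak{c}$ be a cover-tree neighbor map for $\mathcal{C}$. Assume $X_n\notin\mathbb{X}[\mathbb{I}_{<n}]$. Then \[\left\{\tilde X_n\in\mathbb{X}[\mathbb{I}_{<n}]\right\}\subset\bigcup_{B(a,r)\in\mathcal{C}}\left\{\rho(X_n,x)\ge r/2\ \text{for all }x\in\mathbb{X}_{<n},\ \text{and}\ \mathfrak{c}(X_n)=B(a,r)\right\}.\] Moreover, the event in the union indexed by $B=B(a,r)\in\mathcal{C}$ is contained in $E_n^{2B,r/2}$, where $2B=B(a,2r)$.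
   Context: $\mathbb{X}_{<n}=\{X_0,\dots,X_{n-1}\}$; $\tilde X_n\in\arg\min_{x\in\mathbb{X}_{<n}}\rho(X_n,x)$. An indicator process is a sequence $(I_n)_n$ of $\{0,1\}$-valued random variables; $\mathbb{X}[\mathbb{I}_{<n}]=\{X_m:m<n,\ I_m=1\}$. Dyadic cone: $\mathrm{cone}(x;L)=\{B(x,2^{-\ell}):\ell\ge L,\ \ell\in\mathbb{N}_0\}$ (open balls). For a finite or infinite sequence $(a_k)_k$ of distinct points, the cover trees are $\mathcal{C}_1=\mathrm{cone}(a_1;0)$ and $\mathcal{C}_k=\mathcal{C}_{k-1}\cup\mathrm{cone}(a_k;L_k)$ with $L_k=\min\{\ell\in\mathbb{N}:\text{no ball of radius }2^{-\ell}\text{ in }\mathcal{C}_{k-1}\text{ contains }a_k\}$; the cover tree for $\{a_1,\dots,a_k\}$ is $\mathcal{C}_k$. A cover-tree neighbor map for $\mathcal{C}_k$ is a map $\mathfrak{c}_k:\mathcal{X}\setminus\{a_1,\dots,a_k\}\to\mathcal{C}_k$ such that $\mathfrak{c}_k(x)=B(a,r)$ implies $x\in B(a,2r)$ and $r/2\le\rho(x,\{a_1,\dots,a_k\})<r$. For a set $U$ and $s>0$, $E_n^{U,s}=\{\rho(X_n,\tilde X_n)\ge s\}\cap\{X_n\in U\}$. *)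

theory Defs
  imports "HOL-Analysis.Analysis"
begin

text \<open>Balls of a cover tree are represented by their (center, radius) pairs;
  the pair (a, r) stands for the open ball B(a,r) = ball a r.\<close>

definition dyadic_cone :: "'a \<Rightarrow> nat \<Rightarrow> ('a \<times> real) set" where
  "dyadic_cone x L = {(x, (1/2) ^ l) | l. l \<ge> L}"

text \<open>Cover trees, built from a list given in reverse order (last point first).\<close>
fun cover_tree_rev :: "'a::metric_space list \<Rightarrow> ('a \<times> real) set" where
  "cover_tree_rev [] = {}"
| "cover_tree_rev (a # rs) =
     (if rs = [] then dyadic_cone a 0
      else cover_tree_rev rs \<union>
        dyadic_cone a (LEAST l::nat. l \<ge> 1 \<and>
           \<not> (\<exists>(b, r) \<in> cover_tree_rev rs. r = (1/2) ^ l \<and> a \<in> ball b r)))"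

definition cover_tree :: "'a::metric_space list \<Rightarrow> ('a \<times> real) set" where
  "cover_tree as = cover_tree_rev (rev as)"

definition cover_tree_nbr_map :: "'a::metric_space list \<Rightarrow> ('a \<Rightarrow> 'a \<times> real) \<Rightarrow> bool" where
  "cover_tree_nbr_map as c \<longleftrightarrow>
     (\<forall>x. x \<notin> set as \<longrightarrow>
        c x \<in> cover_tree as \<and>
        (\<forall>a r. c x = (a, r) \<longrightarrow>
           x \<in> ball a (2 * r) \<and> r / 2 \<le> infdist x (set as) \<and> infdist x (set as) < r))"

definition indicated :: "(nat \<Rightarrow> 'a) \<Rightarrow> (nat \<Rightarrow> bool) \<Rightarrow> nat \<Rightarrow> 'a set" where
  "indicated X I n = {X m | m. m < n \<and> I m}"

definition indicated_enum :: "(nat \<Rightarrow> 'a) \<Rightarrow> (nat \<Rightarrow> bool) \<Rightarrow> nat \<Rightarrow> 'a list" where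
  "indicated_enum X I n = remdups (map X (filter I [0..<n]))"

definition nn_process :: "(nat \<Rightarrow> 'a::metric_space) \<Rightarrow> (nat \<Rightarrow> 'a) \<Rightarrow> bool" where
  "nn_process X Xt \<longleftrightarrow>
     (\<forall>m\<ge>1. Xt m \<in> X ` {..<m} \<and> (\<forall>x \<in> X ` {..<m}. dist (X m) (Xt m) \<le> dist (X m) x))"

definition E_event :: "(nat \<Rightarrow> 'a::metric_space) \<Rightarrow> (nat \<Rightarrow> 'a) \<Rightarrow> nat \<Rightarrow> 'a set \<Rightarrow> real \<Rightarrow> bool" where
  "E_event X Xt n U s \<longleftrightarrow> dist (X n) (Xt n) \<ge> s \<and> X n \<in> U"

end

theory Submission
  imports Defs
begin

text \<open>The cover-tree neighbor map c assigns to X n a ball (a, r) with X n \<in> ball a (2 r) and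
  r/2 \<le> \<rho>(X n, X[I_{<n}]). If the nearest neighbor of X n is indicated, its distance, which is
  the minimum over all of X_{<n}, dominates this infimum, so every point of X_{<n} is at
  distance at least r/2. Conversely, on that event the nearest neighbor, being one of the
  X_{<n}, is at distance at least r/2, which together with X n \<in> ball a (2 r) is the event E.\<close>

lemma set_indicated_enum [simp]: "set (indicated_enum X I n) = indicated X I n"
  unfolding indicated_enum_def indicated_def by auto

lemma nn_processD:
  assumes "nn_process X Xt" and "1 \<le> m"
  shows nn_process_mem: "Xt m \<in> X ` {..<m}"
    and nn_process_le: "x \<in> X ` {..<m} \<Longrightarrow> dist (X m) (Xt m) \<le> dist (X m) x"
  using assms unfolding nn_process_def by auto

lemma cover_tree_nbr_mapD:
  assumes "cover_tree_nbr_map as c" and "x \<notin> set as" and "c x = (a, r)"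
  shows "(a, r) \<in> cover_tree as" and "x \<in> ball a (2 * r)"
    and "r / 2 \<le> infdist x (set as)"
  using assms unfolding cover_tree_nbr_map_def by auto

lemma infdist_le_dist_of_nearest:
  assumes "y \<in> A" and "\<forall>z\<in>S. dist x y \<le> dist x z" and "z \<in> S"
  shows "infdist x A \<le> dist x z"
  using order_trans[OF infdist_le[OF assms(1)]] assms(2,3) by blast

theorem lemma6:
  fixes X :: "nat \<Rightarrow> 'a::metric_space" and Xt :: "nat \<Rightarrow> 'a"
    and I :: "nat \<Rightarrow> bool" and n :: nat and c :: "'a \<Rightarrow> 'a \<times> real"
  assumes "bounded (UNIV :: 'a set)" and "diameter (UNIV :: 'a set) = 1"
    and "nn_process X Xt"
    and "n \<ge> 1"
    and "cover_tree_nbr_map (indicated_enum X I n) c"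
    and "X n \<notin> indicated X I n"
  shows "(Xt n \<in> indicated X I n \<longrightarrow>
            (\<exists>(a, r) \<in> cover_tree (indicated_enum X I n).
               (\<forall>x \<in> X ` {..<n}. dist (X n) x \<ge> r / 2) \<and> c (X n) = (a, r)))
       \<and> (\<forall>(a, r) \<in> cover_tree (indicated_enum X I n).
            ((\<forall>x \<in> X ` {..<n}. dist (X n) x \<ge> r / 2) \<and> c (X n) = (a, r))
              \<longrightarrow> E_event X Xt n (ball a (2 * r)) (r / 2))"
proof -
  let ?C = "cover_tree (indicated_enum X I n)"
  obtain a r where c_Xn: "c (X n) = (a, r)" by (cases "c (X n)")
  have "X n \<notin> set (indicated_enum X I n)"
    using assms(6) by simp
  note nbr = cover_tree_nbr_mapD[OF assms(5) this c_Xn]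
  have nearest: "\<forall>x \<in> X ` {..<n}. dist (X n) (Xt n) \<le> dist (X n) x"
    using nn_process_le[OF assms(3,4)] by blast
  have "\<exists>(a, r) \<in> ?C. (\<forall>x \<in> X ` {..<n}. dist (X n) x \<ge> r / 2) \<and> c (X n) = (a, r)"
    if "Xt n \<in> indicated X I n"
  proof -
    have "\<forall>x \<in> X ` {..<n}. r / 2 \<le> dist (X n) x"
      using nbr(3) infdist_le_dist_of_nearest[OF that nearest] by fastforce
    then show ?thesis using nbr(1) c_Xn by blast
  qed
  moreover have "E_event X Xt n (ball a' (2 * r')) (r' / 2)"
    if "\<forall>x \<in> X ` {..<n}. dist (X n) x \<ge> r' / 2" and "c (X n) = (a', r')" for a' r'
    using that nbr(2) c_Xn nn_process_mem[OF assms(3,4)] unfolding E_event_def by auto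
  ultimately show ?thesis by blast
qed

end
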